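(* Let $\omega>0$ and consider the saturated oscillator $\dot x=A_0x-B\,\mathrm{sat}(Kx)$ with $x\in\mathbb{R}^2$, $A_0=\begin{bmatrix}0&\omega\\-\omega&0\end{bmatrix}$, $B=\begin{bmatrix}0\\ \omega\end{bmatrix}$, $K=[k_1\ k_2]$. The origin is globally asymptotically stable if and only if $k_1>-1$ and $k_2>0$.
   Context: $\mathrm{sat}(s)=\min\{\overline{u},\max\{-\underline{u},s\}\}$ with $\overline{u},\underline{u}>0$. *)

theory Defs
  imports "HOL-Analysis.Analysis"
begin

definition sat :: "real \<Rightarrow> real \<Rightarrow> real \<Rightarrow> real" where
  "sat ubar ulow s = min ubar (max (- ulow) s)"

definition osc_field :: "real \<Rightarrow> real \<Rightarrow> real \<Rightarrow> real \<Rightarrow> real \<Rightarrow> real^2 \<Rightarrow> real^2" where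
  "osc_field \<omega> ubar ulow k1 k2 x =
     (let A0 = (vector [vector [0, \<omega>], vector [- \<omega>, 0]] :: real^2^2);
          B  = (vector [0, \<omega>] :: real^2);
          K  = (vector [k1, k2] :: real^2)
      in A0 *v x - sat ubar ulow (K \<bullet> x) *\<^sub>R B)"

definition is_solution :: "('a::real_normed_vector \<Rightarrow> 'a) \<Rightarrow> (real \<Rightarrow> 'a) \<Rightarrow> bool" where
  "is_solution f x \<longleftrightarrow> (\<forall>t\<ge>0. (x has_vector_derivative f (x t)) (at t within {0..}))"

definition GAS_origin :: "('a::real_normed_vector \<Rightarrow> 'a) \<Rightarrow> bool" where
  "GAS_origin f \<longleftrightarrow>
     f 0 = 0 \<and>
     (\<forall>\<epsilon>>0. \<exists>\<delta>>0. \<forall>x. is_solution f x \<longrightarrow> norm (x 0) < \<delta> \<longrightarrow> (\<forall>t\<ge>0. norm (x t) < \<epsilon>)) \<and>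
     (\<forall>x. is_solution f x \<longrightarrow> (x \<longlongrightarrow> 0) at_top)"

end

theory Submission
  imports Defs
begin

(* The proof is a Lyapunov argument for the energy V = x2^2/2 + Phi(x1), where Phi is the primitive
   of the restoring force g(s) = s + sat(k1 s) vanishing at 0. Along solutions
   V' = -omega x2 (sat(k1 x1 + k2 x2) - sat(k1 x1)), which has the sign of -k2 because sat is monotone,
   and for k1 > -1 the potential Phi is squeezed between multiples of s^2.

   Necessity: for k1 <= -1 the point (ulow, 0) is a second equilibrium; for k1 > -1 and k2 <= 0 the
   energy is nondecreasing, so the solution starting at (1, 0), which exists globally by Picard
   iteration since the field is globally Lipschitz, stays away from the origin.

   Sufficiency (k1 > -1, k2 > 0): stability follows from the bounds on V. For attractivity, V
   converges and V' is Lipschitz along the bounded solution, so V' -> 0 by Barbalat's lemma. While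
   |x2| >= beta a small V' forces k1 x1 out of the linear zone of sat, which bounds |x2'| from below;
   a bounded x2 cannot sustain this, hence x2 -> 0. Then x2' -> 0 by Barbalat's lemma again, and
   |x1| <= const * (|x2'| + |x2|) -> 0. *)

section \<open>Global solutions of Lipschitz ODEs by Picard iteration\<close>

fun picard_iterate :: "('a::banach \<Rightarrow> 'a) \<Rightarrow> 'a \<Rightarrow> nat \<Rightarrow> real \<Rightarrow> 'a" where
  "picard_iterate f x0 0 = (\<lambda>t. x0)"
| "picard_iterate f x0 (Suc n) = (\<lambda>t. x0 + integral {0..t} (\<lambda>s. f (picard_iterate f x0 n s)))"

definition picard_limit :: "('a::banach \<Rightarrow> 'a) \<Rightarrow> 'a \<Rightarrow> real \<Rightarrow> 'a" where
  "picard_limit f x0 t = x0 + (\<Sum>n. picard_iterate f x0 (Suc n) t - picard_iterate f x0 n t)"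

lemma continuous_on_picard_iterate:
  assumes "continuous_on UNIV f"
  shows "continuous_on {0..T} (picard_iterate f x0 n)"
proof (induction n)
  case (Suc n)
  have "continuous_on {0..T} (\<lambda>s. f (picard_iterate f x0 n s))"
    using Suc continuous_on_compose2[OF assms] by blast
  then have "continuous_on {0..T} (\<lambda>t. integral {0..t} (\<lambda>s. f (picard_iterate f x0 n s)))"
    by (intro indefinite_integral_continuous_1 integrable_continuous_real)
  then show ?case by (simp add: continuous_on_add)
qed simp

lemma has_integral_power_0:
  assumes "0 \<le> t"
  shows "((\<lambda>s::real. s ^ n) has_integral t ^ Suc n / Suc n) {0..t}"
proof -
  have "((\<lambda>s::real. s ^ Suc n / Suc n) has_real_derivative s ^ n) (at s within {0..t})" for s
    using DERIV_cdivide[OF DERIV_pow[of "Suc n"], of "Suc n"] by simp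
  then have "((\<lambda>s::real. s ^ n) has_integral t ^ Suc n / Suc n - 0 ^ Suc n / Suc n) {0..t}"
    by (intro fundamental_theorem_of_calculus[OF assms])
      (simp add: has_real_derivative_iff_has_vector_derivative)
  then show ?thesis
    by simp
qed

lemma norm_picard_iterate_step_le:
  assumes L: "L-lipschitz_on UNIV f" and "t \<ge> 0"
  shows "norm (picard_iterate f x0 (Suc n) t - picard_iterate f x0 n t)
    \<le> norm (f x0) * L ^ n * t ^ Suc n / fact (Suc n)"
  using \<open>t \<ge> 0\<close>
proof (induction n arbitrary: t)
  case (Suc n)
  define c where "c = norm (f x0) * L ^ Suc n / fact (Suc n)"
  have fc: "continuous_on UNIV f"
    using L by (rule lipschitz_on_continuous_on)
  have integrable: "(\<lambda>s. f (picard_iterate f x0 m s)) integrable_on {0..t}" for m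
    by (rule integrable_continuous_real,
        rule continuous_on_compose2[OF fc continuous_on_picard_iterate[OF fc]]) auto
  have "norm (picard_iterate f x0 (Suc (Suc n)) t - picard_iterate f x0 (Suc n) t)
      = norm (integral {0..t} (\<lambda>s. f (picard_iterate f x0 (Suc n) s) - f (picard_iterate f x0 n s)))"
    using integral_diff[OF integrable[of "Suc n"] integrable[of n]] by simp
  also have "\<dots> \<le> integral {0..t} (\<lambda>s. c * s ^ Suc n)"
  proof (rule integral_norm_bound_integral)
    fix s assume s: "s \<in> {0..t}"
    have "norm (f (picard_iterate f x0 (Suc n) s) - f (picard_iterate f x0 n s))
        \<le> L * norm (picard_iterate f x0 (Suc n) s - picard_iterate f x0 n s)"
      using lipschitz_on_normD[OF L] by simp
    also have "\<dots> \<le> L * (norm (f x0) * L ^ n * s ^ Suc n / fact (Suc n))"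
      using Suc.IH[of s] s lipschitz_on_nonneg[OF L] by (intro mult_left_mono) auto
    finally show "norm (f (picard_iterate f x0 (Suc n) s) - f (picard_iterate f x0 n s)) \<le> c * s ^ Suc n"
      by (simp add: c_def field_simps)
  next
    show "(\<lambda>s. f (picard_iterate f x0 (Suc n) s) - f (picard_iterate f x0 n s)) integrable_on {0..t}"
      by (rule integrable_diff[OF integrable integrable])
    show "(\<lambda>s. c * s ^ Suc n) integrable_on {0..t}"
      by (intro integrable_continuous_real continuous_intros)
  qed
  also have "\<dots> = c * (t ^ Suc (Suc n) / Suc (Suc n))"
    by (intro integral_unique has_integral_mult_right has_integral_power_0 Suc.prems)
  also have "\<dots> = norm (f x0) * L ^ Suc n * t ^ Suc (Suc n) / fact (Suc (Suc n))"
    unfolding c_def by (simp add: field_simps del: of_nat_Suc)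
  finally show ?case .
qed simp

lemma uniform_limit_picard_iterate:
  assumes L: "L-lipschitz_on UNIV f"
  shows "uniform_limit {0..T} (picard_iterate f x0) (picard_limit f x0) sequentially"
proof -
  define M where "M n = norm (f x0) * L ^ n * T ^ Suc n / fact (Suc n)" for n
  have L0: "L \<ge> 0"
    using L by (rule lipschitz_on_nonneg)
  have "summable M"
  proof (rule summable_comparison_test)
    show "summable (\<lambda>n. (norm (f x0) * \<bar>T\<bar>) * (inverse (fact n) * (L * \<bar>T\<bar>) ^ n))"
      by (rule summable_mult, rule summable_exp)
    have "norm (M n) \<le> (norm (f x0) * \<bar>T\<bar>) * ((L * \<bar>T\<bar>) ^ n / fact n)" for n
    proof -
      have "norm (M n) = (norm (f x0) * \<bar>T\<bar>) * ((L * \<bar>T\<bar>) ^ n / fact (Suc n))"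
        unfolding M_def using L0 by (simp add: abs_mult power_abs power_mult_distrib field_simps)
      also have "\<dots> \<le> (norm (f x0) * \<bar>T\<bar>) * ((L * \<bar>T\<bar>) ^ n / fact n)"
        by (intro mult_left_mono divide_left_mono) (auto simp: L0 fact_mono)
      finally show ?thesis .
    qed
    then show "\<exists>N. \<forall>n\<ge>N. norm (M n) \<le> (norm (f x0) * \<bar>T\<bar>) * (inverse (fact n) * (L * \<bar>T\<bar>) ^ n)"
      by (simp add: field_simps)
  qed
  then have "uniform_limit {0..T} (\<lambda>n t. \<Sum>i<n. picard_iterate f x0 (Suc i) t - picard_iterate f x0 i t)
      (\<lambda>t. \<Sum>i. picard_iterate f x0 (Suc i) t - picard_iterate f x0 i t) sequentially"
  proof (rule Weierstrass_m_test[rotated])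
    fix n t assume t: "t \<in> {0..T}"
    then have "norm (picard_iterate f x0 (Suc n) t - picard_iterate f x0 n t)
        \<le> norm (f x0) * L ^ n * t ^ Suc n / fact (Suc n)"
      using norm_picard_iterate_step_le[OF L] by simp
    also have "\<dots> \<le> M n"
      unfolding M_def using t L0 by (intro divide_right_mono mult_left_mono power_mono) auto
    finally show "norm (picard_iterate f x0 (Suc n) t - picard_iterate f x0 n t) \<le> M n" .
  qed
  then have "uniform_limit {0..T} (\<lambda>n t. x0 + (\<Sum>i<n. picard_iterate f x0 (Suc i) t - picard_iterate f x0 i t))
      (picard_limit f x0) sequentially"
    unfolding picard_limit_def by (intro uniform_limit_add uniform_limit_const)
  moreover have "(\<lambda>n t. x0 + (\<Sum>i<n. picard_iterate f x0 (Suc i) t - picard_iterate f x0 i t))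
      = picard_iterate f x0"
    by (intro ext, subst sum_lessThan_telescope) simp
  ultimately show ?thesis
    by simp
qed

lemma picard_limit_integral_eq:
  assumes L: "L-lipschitz_on UNIV f" and t: "t \<ge> 0"
  shows "picard_limit f x0 t = x0 + integral {0..t} (\<lambda>s. f (picard_limit f x0 s))"
proof -
  have fc: "continuous_on UNIV f"
    using L by (rule lipschitz_on_continuous_on)
  have u: "uniform_limit {0..t} (picard_iterate f x0) (picard_limit f x0) sequentially"
    by (rule uniform_limit_picard_iterate[OF L])
  have uf: "uniform_limit {0..t} (\<lambda>n s. f (picard_iterate f x0 n s)) (\<lambda>s. f (picard_limit f x0 s))
      sequentially"
    using uniform_limit_compose_uniformly_continuous_on[OF u lipschitz_on_uniformly_continuous[OF L]]
    by simp
  obtain I J where I: "\<And>n. ((\<lambda>s. f (picard_iterate f x0 n s)) has_integral I n) {0..t}"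
    and J: "((\<lambda>s. f (picard_limit f x0 s)) has_integral J) {0..t}" and "I \<longlonglongrightarrow> J"
    using uniform_limit_integral[OF uf] continuous_on_compose2[OF fc continuous_on_picard_iterate[OF fc]]
    by (metis subset_UNIV trivial_limit_sequentially)
  moreover have "(\<lambda>n. picard_iterate f x0 (Suc n) t) = (\<lambda>n. x0 + I n)"
    by (simp add: integral_unique[OF I])
  ultimately have "(\<lambda>n. picard_iterate f x0 (Suc n) t) \<longlonglongrightarrow> x0 + J"
    by (simp add: tendsto_add)
  moreover have "(\<lambda>n. picard_iterate f x0 (Suc n) t) \<longlonglongrightarrow> picard_limit f x0 t"
    by (rule LIMSEQ_Suc[OF tendsto_uniform_limitI[OF u]]) (use t in auto)
  ultimately show ?thesis
    using J LIMSEQ_unique by (force simp: integral_unique)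
qed

theorem picard_limit_solves:
  assumes L: "L-lipschitz_on UNIV f"
  shows "is_solution f (picard_limit f x0)" and "picard_limit f x0 0 = x0"
proof -
  have fc: "continuous_on UNIV f"
    using L by (rule lipschitz_on_continuous_on)
  show "picard_limit f x0 0 = x0"
    using picard_limit_integral_eq[OF L, of 0] by simp
  show "is_solution f (picard_limit f x0)"
    unfolding is_solution_def
  proof (intro allI impI)
    fix t :: real assume t: "t \<ge> 0"
    have cont: "continuous_on {0..t+1} (picard_limit f x0)"
      by (rule uniform_limit_theorem[OF _ uniform_limit_picard_iterate[OF L]])
        (auto intro!: always_eventually continuous_on_picard_iterate[OF fc])
    have "((\<lambda>u. x0 + integral {0..u} (\<lambda>s. f (picard_limit f x0 s))) has_vector_derivative
        f (picard_limit f x0 t)) (at t within {0..t+1})"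
      using integral_has_vector_derivative[OF continuous_on_compose2[OF fc cont], of t] t
      by (auto intro!: derivative_eq_intros)
    then have "(picard_limit f x0 has_vector_derivative f (picard_limit f x0 t)) (at t within {0..t+1})"
      by (rule has_vector_derivative_transform[rotated 2]) (use t picard_limit_integral_eq[OF L] in auto)
    moreover have "at t within {0..t+1} = at t within {0..}"
      by (rule at_within_nhd[where S="{..<t+1}"]) auto
    ultimately show "(picard_limit f x0 has_vector_derivative f (picard_limit f x0 t)) (at t within {0..})"
      by simp
  qed
qed

section \<open>Saturation and the oscillator field\<close>

lemma mono_sat: "mono (sat ub ul)"
  unfolding sat_def by (intro monoI) linarith

lemma abs_sat_diff_le: "\<bar>sat ub ul a - sat ub ul b\<bar> \<le> \<bar>a - b\<bar>"
  unfolding sat_def by linarith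

lemma lipschitz_on_sat: "1-lipschitz_on A (sat ub ul)"
  by (intro lipschitz_onI) (auto simp: dist_real_def abs_sat_diff_le)

lemma sat_0: "0 \<le> ub \<Longrightarrow> 0 \<le> ul \<Longrightarrow> sat ub ul 0 = 0"
  unfolding sat_def by simp

lemma abs_sat_le: "0 \<le> ub \<Longrightarrow> 0 \<le> ul \<Longrightarrow> \<bar>sat ub ul s\<bar> \<le> max ub ul"
  unfolding sat_def by linarith

lemma mult_sat_ge_min:
  assumes "0 \<le> ub" "0 \<le> ul"
  shows "min 0 (x * y) \<le> x * sat ub ul y"
proof (cases "0 \<le> y")
  case True
  then have "0 \<le> sat ub ul y" "sat ub ul y \<le> y"
    using assms unfolding sat_def by auto
  then show ?thesis
    by (cases "0 \<le> x") (auto intro: mult_left_mono_neg min.coboundedI2)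
next
  case False
  then have "sat ub ul y \<le> 0" "y \<le> sat ub ul y"
    using assms unfolding sat_def by auto
  then show ?thesis
    by (cases "0 \<le> x")
      (auto intro: mult_left_mono min.coboundedI2 order_trans[OF min.cobounded1 mult_nonpos_nonpos])
qed

lemma abs_sat_diff_ge:
  assumes "0 < ub" "0 < ul" "\<bar>a\<bar> \<le> min ub ul / 2"
  shows "min \<bar>b - a\<bar> (min ub ul / 2) \<le> \<bar>sat ub ul b - sat ub ul a\<bar>"
proof -
  have "- ul \<le> a" "a \<le> ub" "min ub ul \<le> ub" "min ub ul \<le> ul"
    using assms by auto
  then show ?thesis
    using assms unfolding sat_def by (auto simp: min_def max_def abs_if split: if_splits)
qed

lemma osc_field_nth:
  "osc_field \<omega> ub ul k1 k2 x $ 1 = \<omega> * x $ 2"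
  "osc_field \<omega> ub ul k1 k2 x $ 2 = - \<omega> * (x $ 1 + sat ub ul (k1 * x $ 1 + k2 * x $ 2))"
  unfolding osc_field_def Let_def
  by (simp_all add: matrix_vector_mult_def sum_2 inner_vec_def algebra_simps)

lemma lipschitz_osc_field: "\<exists>L. L-lipschitz_on UNIV (osc_field \<omega> ub ul k1 k2)"
proof -
  have "\<exists>L. L-lipschitz_on UNIV (\<lambda>x. A *v x - sat ub ul (k \<bullet> x) *\<^sub>R b)"
    for A :: "real^2^2" and b k :: "real^2"
  proof -
    obtain LA where "LA-lipschitz_on UNIV ((*v) A)"
      using bounded_linear.lipschitz_boundE[OF matrix_vector_mul_bounded_linear] .
    moreover obtain Lk where "Lk-lipschitz_on UNIV ((\<bullet>) k)"
      using bounded_linear.lipschitz_boundE[OF bounded_linear_inner_right] .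
    moreover obtain Lb where "Lb-lipschitz_on UNIV (\<lambda>r. r *\<^sub>R b)"
      using bounded_linear.lipschitz_boundE[OF bounded_linear_scaleR_left] .
    ultimately have "(LA + Lb * (1 * Lk))-lipschitz_on UNIV (\<lambda>x. A *v x - sat ub ul (k \<bullet> x) *\<^sub>R b)"
      by (intro lipschitz_on_diff lipschitz_on_compose2 lipschitz_on_sat)
        (auto intro: lipschitz_on_subset)
    then show ?thesis ..
  qed
  then show ?thesis
    unfolding osc_field_def Let_def .
qed

lemma mult_diff_mono_nonneg:
  fixes f :: "real \<Rightarrow> real"
  assumes "mono f" "0 \<le> c"
  shows "0 \<le> x * (f (a + c * x) - f a)"
proof (cases "0 \<le> x")
  case True
  then have "a \<le> a + c * x"
    using \<open>0 \<le> c\<close> by simp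
  then have "f a \<le> f (a + c * x)"
    by (rule monoD[OF \<open>mono f\<close>])
  then show ?thesis
    using True by simp
next
  case False
  then have "a + c * x \<le> a"
    using \<open>0 \<le> c\<close> by (simp add: mult_nonneg_nonpos)
  then have "f (a + c * x) \<le> f a"
    by (rule monoD[OF \<open>mono f\<close>])
  then show ?thesis
    using False by (simp add: mult_nonpos_nonpos)
qed

section \<open>The restoring force and its potential\<close>

lemma has_real_derivative_max_0_squared:
  "((\<lambda>z::real. (max z 0)\<^sup>2) has_real_derivative 2 * max z 0) (at z)"
proof -
  consider "z > 0" | "z < 0" | "z = 0" by linarith
  then show ?thesis
  proof cases
    case 1
    have "((\<lambda>z::real. z\<^sup>2) has_real_derivative 2 * max z 0) (at z)"
      using 1 by (auto intro!: derivative_eq_intros)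
    then show ?thesis
      by (rule has_field_derivative_transform_within_open[where S="{0<..}"]) (use 1 in auto)
  next
    case 2
    have "((\<lambda>z::real. 0) has_real_derivative 2 * max z 0) (at z)"
      using 2 by (auto intro!: derivative_eq_intros)
    then show ?thesis
      by (rule has_field_derivative_transform_within_open[where S="{..<0}"]) (use 2 in auto)
  next
    case 3
    have "((\<lambda>h::real. (max h 0)\<^sup>2 / h) \<longlongrightarrow> 0) (at 0)"
    proof (rule Lim_null_comparison)
      show "\<forall>\<^sub>F h in at 0. norm ((max h 0)\<^sup>2 / h) \<le> \<bar>h\<bar>"
        by (intro always_eventually allI) (auto simp: max_def power2_eq_square)
    qed (auto intro!: tendsto_eq_intros)
    then show ?thesis
      unfolding 3 DERIV_def by simp
  qed
qed

definition sat_primitive :: "real \<Rightarrow> real \<Rightarrow> real \<Rightarrow> real" where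
  "sat_primitive ub ul y = y\<^sup>2 / 2 - (max (y - ub) 0)\<^sup>2 / 2 - (max (- ul - y) 0)\<^sup>2 / 2"

lemma has_real_derivative_sat_primitive:
  assumes "0 < ub" "0 < ul"
  shows "(sat_primitive ub ul has_real_derivative sat ub ul y) (at y)"
proof -
  have "((\<lambda>y. (max (y - ub) 0)\<^sup>2) has_real_derivative 2 * max (y - ub) 0 * 1) (at y)"
    by (rule DERIV_chain2[OF has_real_derivative_max_0_squared]) (auto intro!: derivative_eq_intros)
  moreover have "((\<lambda>y. (max (- ul - y) 0)\<^sup>2) has_real_derivative 2 * max (- ul - y) 0 * (- 1)) (at y)"
    by (rule DERIV_chain2[OF has_real_derivative_max_0_squared]) (auto intro!: derivative_eq_intros)
  ultimately have "(sat_primitive ub ul has_real_derivative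
      2 * y / 2 - 2 * max (y - ub) 0 * 1 / 2 - 2 * max (- ul - y) 0 * (- 1) / 2) (at y)"
    unfolding sat_primitive_def[abs_def]
    by (intro DERIV_diff DERIV_cdivide DERIV_pow[of 2, simplified])
  moreover have "2 * y / 2 - 2 * max (y - ub) 0 * 1 / 2 - 2 * max (- ul - y) 0 * (- 1) / 2 = sat ub ul y"
    using assms unfolding sat_def by (simp add: max_def min_def)
  ultimately show ?thesis by simp
qed

definition restoring_force :: "real \<Rightarrow> real \<Rightarrow> real \<Rightarrow> real \<Rightarrow> real" where
  "restoring_force ub ul k1 s = s + sat ub ul (k1 * s)"

text \<open>For \<open>k1 = 0\<close> the quotient is \<open>0 / 0 = 0\<close>, which is the correct value because the
  saturation term of the restoring force then vanishes.\<close>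
definition restoring_potential :: "real \<Rightarrow> real \<Rightarrow> real \<Rightarrow> real \<Rightarrow> real" where
  "restoring_potential ub ul k1 s = s\<^sup>2 / 2 + sat_primitive ub ul (k1 * s) / k1"

lemma has_real_derivative_restoring_potential:
  assumes "0 < ub" "0 < ul"
  shows "(restoring_potential ub ul k1 has_real_derivative restoring_force ub ul k1 s) (at s)"
proof (cases "k1 = 0")
  case True
  then show ?thesis
    using assms unfolding restoring_potential_def[abs_def] restoring_force_def
    by (auto intro!: derivative_eq_intros simp: sat_0)
next
  case False
  have "((\<lambda>s. sat_primitive ub ul (k1 * s)) has_real_derivative sat ub ul (k1 * s) * k1) (at s)"
    by (rule DERIV_chain2[OF has_real_derivative_sat_primitive[OF assms]])
      (auto intro!: derivative_eq_intros)
  then show ?thesis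
    using False unfolding restoring_potential_def[abs_def] restoring_force_def
    by (auto intro!: derivative_eq_intros)
qed

lemma restoring_force_coercive:
  assumes "0 \<le> ub" "0 \<le> ul"
  shows "min 1 (1 + k1) * s\<^sup>2 \<le> s * restoring_force ub ul k1 s"
proof -
  have "min 1 (1 + k1) * s\<^sup>2 = s\<^sup>2 + min 0 k1 * s\<^sup>2"
    by (simp add: min_def algebra_simps)
  also have "min 0 k1 * s\<^sup>2 = min 0 (s * (k1 * s))"
    by (subst min_mult_distrib_right) (simp add: power2_eq_square mult.commute mult.left_commute)
  also have "\<dots> \<le> s * sat ub ul (k1 * s)"
    using assms by (rule mult_sat_ge_min)
  finally show ?thesis
    by (simp add: restoring_force_def power2_eq_square algebra_simps)
qed

lemma restoring_force_le:
  assumes "0 \<le> ub" "0 \<le> ul"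
  shows "s * restoring_force ub ul k1 s \<le> (1 + \<bar>k1\<bar>) * s\<^sup>2"
proof -
  have "s * sat ub ul (k1 * s) \<le> \<bar>s\<bar> * \<bar>sat ub ul (k1 * s)\<bar>"
    by (metis abs_ge_self abs_mult)
  also have "\<dots> \<le> \<bar>s\<bar> * \<bar>k1 * s\<bar>"
    using abs_sat_diff_le[of ub ul "k1 * s" 0] sat_0[OF assms] by (simp add: mult_left_mono)
  also have "\<dots> = \<bar>k1\<bar> * s\<^sup>2"
    by (simp add: abs_mult power2_eq_square)
  finally show ?thesis
    by (simp add: restoring_force_def power2_eq_square distrib_left distrib_right)
qed

lemma abs_restoring_force_ge:
  assumes "0 \<le> ub" "0 \<le> ul"
  shows "min 1 (1 + k1) * \<bar>s\<bar> \<le> \<bar>restoring_force ub ul k1 s\<bar>"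
proof (cases "s = 0")
  case False
  have "\<bar>s\<bar> * (min 1 (1 + k1) * \<bar>s\<bar>) = min 1 (1 + k1) * s\<^sup>2"
    by (simp add: power2_eq_square abs_mult_self_eq algebra_simps)
  also have "\<dots> \<le> \<bar>s\<bar> * \<bar>restoring_force ub ul k1 s\<bar>"
    using restoring_force_coercive[OF assms, of k1 s] by (simp add: abs_mult[symmetric])
  finally show ?thesis
    using False by simp
qed (simp add: restoring_force_def sat_0 assms)

lemma nonneg_of_derivative_sign:
  fixes F F' :: "real \<Rightarrow> real"
  assumes "F 0 = 0" and deriv: "\<And>s. (F has_real_derivative F' s) (at s)"
    and sign: "\<And>s. 0 \<le> s * F' s"
  shows "0 \<le> F s"
proof -
  have cont: "continuous_on A F" for A
    using deriv by (meson DERIV_continuous continuous_at_imp_continuous_on)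
  consider "0 \<le> s" | "s \<le> 0" by linarith
  then show ?thesis
  proof cases
    case 1
    have "F 0 \<le> F s"
    proof (rule DERIV_nonneg_imp_increasing_open[OF 1 _ cont])
      fix x :: real assume "0 < x"
      then show "\<exists>y. (F has_real_derivative y) (at x) \<and> 0 \<le> y"
        using deriv sign[of x] by (auto simp: zero_le_mult_iff)
    qed
    then show ?thesis using \<open>F 0 = 0\<close> by simp
  next
    case 2
    have "F 0 \<le> F s"
    proof (rule DERIV_nonpos_imp_decreasing_open[OF 2 _ cont])
      fix x :: real assume "x < 0"
      then show "\<exists>y. (F has_real_derivative y) (at x) \<and> y \<le> 0"
        using deriv sign[of x] by (auto simp: zero_le_mult_iff)
    qed
    then show ?thesis using \<open>F 0 = 0\<close> by simp
  qed
qed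

lemma restoring_potential_bounds:
  assumes "0 < ub" "0 < ul"
  shows "min 1 (1 + k1) * s\<^sup>2 / 2 \<le> restoring_potential ub ul k1 s"
    and "restoring_potential ub ul k1 s \<le> (1 + \<bar>k1\<bar>) * s\<^sup>2 / 2"
proof -
  have P0: "restoring_potential ub ul k1 0 = 0"
    unfolding restoring_potential_def sat_primitive_def using assms by simp
  have dq: "((\<lambda>s. c * s\<^sup>2 / 2) has_real_derivative c * s) (at s)" for c s :: real
    by (auto intro!: derivative_eq_intros)
  have "0 \<le> restoring_potential ub ul k1 s - min 1 (1 + k1) * s\<^sup>2 / 2"
  proof (rule nonneg_of_derivative_sign[where
        F = "\<lambda>s. restoring_potential ub ul k1 s - min 1 (1 + k1) * s\<^sup>2 / 2" and
        F' = "\<lambda>s. restoring_force ub ul k1 s - min 1 (1 + k1) * s"])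
    show "((\<lambda>s. restoring_potential ub ul k1 s - min 1 (1 + k1) * s\<^sup>2 / 2) has_real_derivative
        restoring_force ub ul k1 s - min 1 (1 + k1) * s) (at s)" for s
      by (intro DERIV_diff has_real_derivative_restoring_potential assms dq)
    show "0 \<le> s * (restoring_force ub ul k1 s - min 1 (1 + k1) * s)" for s
      using restoring_force_coercive[of ub ul k1 s] assms by (simp add: power2_eq_square algebra_simps)
  qed (simp add: P0)
  then show "min 1 (1 + k1) * s\<^sup>2 / 2 \<le> restoring_potential ub ul k1 s"
    by simp
  have "0 \<le> (1 + \<bar>k1\<bar>) * s\<^sup>2 / 2 - restoring_potential ub ul k1 s"
  proof (rule nonneg_of_derivative_sign[where
        F = "\<lambda>s. (1 + \<bar>k1\<bar>) * s\<^sup>2 / 2 - restoring_potential ub ul k1 s" and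
        F' = "\<lambda>s. (1 + \<bar>k1\<bar>) * s - restoring_force ub ul k1 s"])
    show "((\<lambda>s. (1 + \<bar>k1\<bar>) * s\<^sup>2 / 2 - restoring_potential ub ul k1 s) has_real_derivative
        (1 + \<bar>k1\<bar>) * s - restoring_force ub ul k1 s) (at s)" for s
      by (intro DERIV_diff has_real_derivative_restoring_potential assms dq)
    show "0 \<le> s * ((1 + \<bar>k1\<bar>) * s - restoring_force ub ul k1 s)" for s
      using restoring_force_le[of ub ul s k1] assms by (simp add: power2_eq_square algebra_simps)
  qed (simp add: P0)
  then show "restoring_potential ub ul k1 s \<le> (1 + \<bar>k1\<bar>) * s\<^sup>2 / 2"
    by simp
qed

text \<open>If \<open>k1 x1\<close> lay well inside the linear zone of \<open>sat\<close>, the difference of saturations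
  would be at least \<open>min (k2 \<beta>) (min ub ul / 2)\<close>; so a small difference keeps \<open>x1\<close> away
  from 0, where the restoring force is bounded below.\<close>
lemma force_bounded_below_where_gap_small:
  assumes "0 < ub" "0 < ul" "-1 < k1" "0 < k2" "0 < \<beta>"
  obtains \<zeta> \<mu> where "0 < \<zeta>" "0 < \<mu>"
    "\<And>x1 x2. \<beta> \<le> \<bar>x2\<bar> \<Longrightarrow> \<bar>sat ub ul (k1 * x1 + k2 * x2) - sat ub ul (k1 * x1)\<bar> < \<zeta>
      \<Longrightarrow> \<mu> \<le> \<bar>x1 + sat ub ul (k1 * x1 + k2 * x2)\<bar>"
proof -
  define m where "m = min ub ul"
  define c where "c = min 1 (1 + k1)"
  define \<rho> where "\<rho> = m / (2 * (\<bar>k1\<bar> + 1))"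
  define \<zeta> where "\<zeta> = min (k2 * \<beta>) (min (m / 2) (c * \<rho> / 2))"
  have "0 < m" "0 < c" "0 < \<rho>"
    using assms by (auto simp: m_def c_def \<rho>_def)
  then have "0 < \<zeta>" "0 < c * \<rho> / 2"
    using assms by (auto simp: \<zeta>_def)
  moreover have "c * \<rho> / 2 \<le> \<bar>x1 + sat ub ul (k1 * x1 + k2 * x2)\<bar>"
    if x2: "\<beta> \<le> \<bar>x2\<bar>" and gap: "\<bar>sat ub ul (k1 * x1 + k2 * x2) - sat ub ul (k1 * x1)\<bar> < \<zeta>" for x1 x2
  proof -
    have "m / 2 < \<bar>k1 * x1\<bar>"
    proof (rule ccontr)
      assume "\<not> m / 2 < \<bar>k1 * x1\<bar>"
      then have "\<bar>k1 * x1\<bar> \<le> min ub ul / 2"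
        unfolding m_def by linarith
      then have "min \<bar>k2 * x2\<bar> (m / 2) \<le> \<bar>sat ub ul (k1 * x1 + k2 * x2) - sat ub ul (k1 * x1)\<bar>"
        using abs_sat_diff_ge[OF \<open>0 < ub\<close> \<open>0 < ul\<close>, of "k1 * x1" "k1 * x1 + k2 * x2"]
        unfolding m_def by simp
      moreover have "k2 * \<beta> \<le> \<bar>k2 * x2\<bar>"
        using x2 \<open>0 < k2\<close> by (simp add: abs_mult)
      ultimately show False
        using gap unfolding \<zeta>_def by linarith
    qed
    also have "\<bar>k1 * x1\<bar> \<le> (\<bar>k1\<bar> + 1) * \<bar>x1\<bar>"
      by (simp add: abs_mult algebra_simps)
    finally have "\<rho> \<le> \<bar>x1\<bar>"
      by (simp add: \<rho>_def field_simps)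
    then have "c * \<rho> \<le> \<bar>restoring_force ub ul k1 x1\<bar>"
      using abs_restoring_force_ge[of ub ul k1 x1] assms \<open>0 < c\<close>
      by (auto simp: c_def intro: order_trans[OF mult_left_mono])
    moreover have "x1 + sat ub ul (k1 * x1 + k2 * x2)
        = restoring_force ub ul k1 x1 + (sat ub ul (k1 * x1 + k2 * x2) - sat ub ul (k1 * x1))"
      by (simp add: restoring_force_def)
    ultimately show ?thesis
      using gap unfolding \<zeta>_def by linarith
  qed
  ultimately show ?thesis
    using that by blast
qed

section \<open>Differentiable functions on the half-line\<close>

lemma halfline_MVT:
  fixes h h' :: "real \<Rightarrow> real"
  assumes cont: "continuous_on {0..} h" and deriv: "\<And>t. 0 < t \<Longrightarrow> (h has_real_derivative h' t) (at t)"
    and "0 \<le> a" "a < b"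
  obtains z where "a < z" "z < b" "h b - h a = (b - a) * h' z"
proof -
  have "continuous_on {a..b} h"
    using cont by (rule continuous_on_subset) (use \<open>0 \<le> a\<close> in auto)
  moreover have "h differentiable (at x)" if "a < x" for x
    using deriv[of x] that \<open>0 \<le> a\<close> real_differentiable_def by auto
  ultimately obtain l z
    where "a < z" "z < b" "(h has_real_derivative l) (at z)" "h b - h a = (b - a) * l"
    using MVT[OF \<open>a < b\<close>] by blast
  moreover have "l = h' z"
    using DERIV_unique[OF \<open>(h has_real_derivative l) (at z)\<close> deriv] \<open>0 \<le> a\<close> \<open>a < z\<close> by simp
  ultimately show ?thesis
    using that by blast
qed

lemma halfline_abs_diff_ge_of_abs_derivative_ge:
  fixes h h' :: "real \<Rightarrow> real"
  assumes cont: "continuous_on {0..} h" and deriv: "\<And>t. 0 < t \<Longrightarrow> (h has_real_derivative h' t) (at t)"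
    and "0 \<le> a" "a < b" and fast: "\<And>z. a < z \<Longrightarrow> z < b \<Longrightarrow> \<mu> \<le> \<bar>h' z\<bar>"
  shows "(b - a) * \<mu> \<le> \<bar>h b - h a\<bar>"
proof -
  obtain z where "a < z" "z < b" "h b - h a = (b - a) * h' z"
    using halfline_MVT[OF cont deriv \<open>0 \<le> a\<close> \<open>a < b\<close>] by blast
  then show ?thesis
    using fast[of z] \<open>a < b\<close> by (simp add: abs_mult mult_left_mono)
qed

lemma lipschitz_on_halfline_of_bounded_derivative:
  fixes h h' :: "real \<Rightarrow> real"
  assumes cont: "continuous_on {0..} h" and deriv: "\<And>t. 0 < t \<Longrightarrow> (h has_real_derivative h' t) (at t)"
    and bound: "\<And>t. 0 < t \<Longrightarrow> \<bar>h' t\<bar> \<le> K"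
  shows "K-lipschitz_on {0..} h"
proof (rule lipschitz_on_leI)
  show "0 \<le> K"
    using bound[of 1] by simp
  fix s t :: real assume "s \<in> {0..}" "t \<in> {0..}" "s \<le> t"
  show "dist (h s) (h t) \<le> K * dist s t"
  proof (cases "s = t")
    case False
    then have "0 \<le> s" "s < t"
      using \<open>s \<in> {0..}\<close> \<open>s \<le> t\<close> by auto
    then obtain z where "s < z" "z < t" "h t - h s = (t - s) * h' z"
      using halfline_MVT[OF cont deriv] by blast
    then have "dist (h s) (h t) = dist s t * \<bar>h' z\<bar>"
      by (simp add: dist_real_def abs_mult abs_minus_commute[of "h s"] abs_minus_commute[of s])
    also have "\<dots> \<le> dist s t * K"
      using bound[of z] \<open>0 \<le> s\<close> \<open>s < z\<close> by (intro mult_left_mono) auto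
    finally show ?thesis
      by (simp add: mult.commute)
  qed (simp add: \<open>0 \<le> K\<close>)
qed

lemma antimono_on_halfline_of_derivative_nonpos:
  fixes h h' :: "real \<Rightarrow> real"
  assumes cont: "continuous_on {0..} h" and deriv: "\<And>t. 0 < t \<Longrightarrow> (h has_real_derivative h' t) (at t)"
    and nonpos: "\<And>t. 0 < t \<Longrightarrow> h' t \<le> 0"
  shows "antimono_on {0..} h"
proof (rule monotone_onI)
  fix s t :: real assume "s \<in> {0..}" "t \<in> {0..}" "s \<le> t"
  show "h t \<le> h s"
  proof (rule DERIV_nonpos_imp_decreasing_open[OF \<open>s \<le> t\<close>])
    fix x assume "s < x"
    then have "0 < x"
      using \<open>s \<in> {0..}\<close> by simp
    then show "\<exists>y. (h has_real_derivative y) (at x) \<and> y \<le> 0"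
      using deriv nonpos by blast
  next
    show "continuous_on {s..t} h"
      using cont by (rule continuous_on_subset) (use \<open>s \<in> {0..}\<close> in auto)
  qed
qed

lemma tendsto_Inf_of_antimono_on_halfline:
  fixes h :: "real \<Rightarrow> real"
  assumes anti: "antimono_on {0..} h" and below: "\<And>t. 0 \<le> t \<Longrightarrow> b \<le> h t"
  shows "(h \<longlongrightarrow> Inf (h ` {0..})) at_top"
proof (rule decreasing_tendsto)
  have bdd: "bdd_below (h ` {0..})"
    using below by (intro bdd_belowI2[where m = b]) simp
  then show "\<forall>\<^sub>F t in at_top. Inf (h ` {0..}) \<le> h t"
    by (auto intro!: eventually_at_top_linorderI[of 0] cInf_lower)
  fix x assume "Inf (h ` {0..}) < x"
  then obtain T where "0 \<le> T" "h T < x"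
    using cInf_less_iff[OF _ bdd] by auto
  moreover have "h t \<le> h T" if "T \<le> t" for t
    using monotone_onD[OF anti, of T t] \<open>0 \<le> T\<close> that by simp
  ultimately show "\<forall>\<^sub>F t in at_top. h t < x"
    by (intro eventually_at_top_linorderI[of T]) fastforce
qed

lemma barbalat:
  fixes h h' :: "real \<Rightarrow> real"
  assumes cont: "continuous_on {0..} h" and deriv: "\<And>t. 0 < t \<Longrightarrow> (h has_real_derivative h' t) (at t)"
    and lip: "C-lipschitz_on {0..} h'" and lim: "(h \<longlongrightarrow> l) at_top"
  shows "(h' \<longlongrightarrow> 0) at_top"
proof (rule tendstoI)
  fix e :: real assume "0 < e"
  define \<delta> where "\<delta> = e / (2 * (C + 1))"
  have "0 \<le> C"
    using lip by (rule lipschitz_on_nonneg)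
  then have \<delta>: "0 < \<delta>" "C * \<delta> \<le> e / 2"
    using \<open>0 < e\<close> by (auto simp: \<delta>_def field_simps)
  have "\<forall>\<^sub>F t in at_top. dist (h t) l < e * \<delta> / 4"
    using lim \<open>0 < e\<close> \<delta> by (intro tendstoD) auto
  then obtain T where T: "\<And>t. T \<le> t \<Longrightarrow> \<bar>h t - l\<bar> < e * \<delta> / 4"
    by (auto simp: eventually_at_top_linorder dist_real_def)
  show "\<forall>\<^sub>F t in at_top. dist (h' t) 0 < e"
  proof (intro eventually_at_top_linorderI[of "max T 0"])
    fix t assume t: "max T 0 \<le> t"
    obtain z where z: "t < z" "z < t + \<delta>" "h (t + \<delta>) - h t = \<delta> * h' z"
      using halfline_MVT[OF cont deriv, of t "t + \<delta>"] t \<delta> by auto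
    have "\<bar>h' z - h' t\<bar> \<le> C * \<bar>z - t\<bar>"
      using lipschitz_onD[OF lip, of z t] t z by (simp add: dist_real_def)
    also have "\<dots> \<le> C * \<delta>"
      using z \<open>0 \<le> C\<close> by (intro mult_left_mono) auto
    finally have "\<bar>h' t\<bar> \<le> \<bar>h' z\<bar> + e / 2"
      using \<delta> by linarith
    moreover have "\<bar>h (t + \<delta>) - h t\<bar> < e * \<delta> / 2"
      using abs_triangle_ineq4[of "h (t + \<delta>) - l" "h t - l"] T[of t] T[of "t + \<delta>"] t \<open>0 < \<delta>\<close>
      by simp
    then have "\<delta> * \<bar>h' z\<bar> < \<delta> * (e / 2)"
      using z(3) \<open>0 < \<delta>\<close> by (simp add: abs_mult)
    then have "\<bar>h' z\<bar> < e / 2"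
      using \<open>0 < \<delta>\<close> by simp
    ultimately show "dist (h' t) 0 < e"
      by simp
  qed
qed

lemma mono_on_halfline_of_derivative_nonneg:
  fixes h h' :: "real \<Rightarrow> real"
  assumes cont: "continuous_on {0..} h" and deriv: "\<And>t. 0 < t \<Longrightarrow> (h has_real_derivative h' t) (at t)"
    and nonneg: "\<And>t. 0 < t \<Longrightarrow> 0 \<le> h' t"
  shows "mono_on {0..} h"
proof -
  have anti: "antimono_on {0..} (\<lambda>t. - h t)"
  proof (rule antimono_on_halfline_of_derivative_nonpos[where h' = "\<lambda>t. - h' t"])
    show "continuous_on {0..} (\<lambda>t. - h t)"
      using cont by (rule continuous_on_minus)
    show "((\<lambda>t. - h t) has_real_derivative - h' t) (at t)" if "0 < t" for t
      using deriv[OF that] by (rule DERIV_minus)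
  qed (use nonneg in simp)
  show ?thesis
  proof (rule monotone_onI)
    fix s t :: real assume "s \<in> {0..}" "t \<in> {0..}" "s \<le> t"
    then show "h s \<le> h t"
      using monotone_onD[OF anti \<open>s \<in> {0..}\<close> \<open>t \<in> {0..}\<close> \<open>s \<le> t\<close>] by simp
  qed
qed

lemma lipschitz_on_mult_bounded:
  fixes f g :: "'a::metric_space \<Rightarrow> real"
  assumes "A-lipschitz_on U f" "B-lipschitz_on U g"
    and "\<And>x. x \<in> U \<Longrightarrow> \<bar>f x\<bar> \<le> M" "\<And>x. x \<in> U \<Longrightarrow> \<bar>g x\<bar> \<le> N" "0 \<le> M" "0 \<le> N"
  shows "(A * N + M * B)-lipschitz_on U (\<lambda>x. f x * g x)"
proof (rule lipschitz_onI)
  have "0 \<le> A" "0 \<le> B"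
    using assms(1,2) by (auto intro: lipschitz_on_nonneg)
  then show "0 \<le> A * N + M * B"
    using assms(5,6) by simp
  fix x y assume "x \<in> U" "y \<in> U"
  have "f x * g x - f y * g y = (f x - f y) * g x + f y * (g x - g y)"
    by (simp add: algebra_simps)
  then have "dist (f x * g x) (f y * g y) \<le> dist (f x) (f y) * \<bar>g x\<bar> + \<bar>f y\<bar> * dist (g x) (g y)"
    by (simp add: dist_real_def abs_mult[symmetric] abs_triangle_ineq)
  also have "\<dots> \<le> (A * dist x y) * N + M * (B * dist x y)"
    using assms \<open>x \<in> U\<close> \<open>y \<in> U\<close> \<open>0 \<le> A\<close>
    by (intro add_mono mult_mono lipschitz_onD) auto
  finally show "dist (f x * g x) (f y * g y) \<le> (A * N + M * B) * dist x y"
    by (simp add: algebra_simps)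
qed

lemma first_zero_after_pos:
  fixes f :: "real \<Rightarrow> real"
  assumes "a \<le> t" and cont: "continuous_on {a..t} f" and "0 < f a" "f t \<le> 0"
  obtains r where "a < r" "r \<le> t" "f r = 0" "\<And>s. a \<le> s \<Longrightarrow> s < r \<Longrightarrow> 0 < f s"
proof -
  define Z where "Z = {a..t} \<inter> f -` {0}"
  have "closed Z"
    unfolding Z_def using cont by (intro continuous_closed_preimage) auto
  obtain q where "a \<le> q" "q \<le> t" "f q = 0"
    using IVT2'[of f t 0 a] assms by auto
  then have "Z \<noteq> {}" "bdd_below Z"
    unfolding Z_def by auto
  define r where "r = Inf Z"
  have "r \<in> Z"
    unfolding r_def using \<open>Z \<noteq> {}\<close> \<open>bdd_below Z\<close> \<open>closed Z\<close> by (rule closed_contains_Inf)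
  then have r: "a \<le> r" "r \<le> t" "f r = 0"
    unfolding Z_def by auto
  have "0 < f s" if s: "a \<le> s" "s < r" for s
  proof (rule ccontr)
    assume "\<not> 0 < f s"
    moreover have "continuous_on {a..s} f"
      using cont by (rule continuous_on_subset) (use s r in auto)
    ultimately obtain q where "a \<le> q" "q \<le> s" "f q = 0"
      using IVT2'[of f s 0 a] \<open>0 < f a\<close> s by auto
    then have "r \<le> q"
      unfolding r_def using \<open>bdd_below Z\<close> s r by (intro cInf_lower) (auto simp: Z_def)
    then show False
      using \<open>q \<le> s\<close> \<open>s < r\<close> by simp
  qed
  moreover have "a < r"
    using r \<open>0 < f a\<close> by (cases "a = r") auto
  ultimately show ?thesis
    using that r by blast
qed

lemma derivative_pos_persists:
  fixes y y' :: "real \<Rightarrow> real"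
  assumes "a \<le> b" and cont: "continuous_on {a..b} y" and cont': "continuous_on {a..b} y'"
    and deriv: "\<And>t. a < t \<Longrightarrow> t < b \<Longrightarrow> (y has_real_derivative y' t) (at t)"
    and nonzero: "\<And>t. a \<le> t \<Longrightarrow> t \<le> b \<Longrightarrow> y a \<le> y t \<Longrightarrow> y' t \<noteq> 0"
    and "0 < y' a"
  shows "\<forall>t\<in>{a..b}. 0 < y' t \<and> y a \<le> y t"
proof -
  have increasing: "y a \<le> y t"
    if "a \<le> t" "t \<le> b" and pos: "\<And>s. a \<le> s \<Longrightarrow> s < t \<Longrightarrow> 0 < y' s" for t
  proof (rule DERIV_nonneg_imp_increasing_open[OF \<open>a \<le> t\<close>])
    show "\<exists>d. (y has_real_derivative d) (at s) \<and> 0 \<le> d" if "a < s" "s < t" for s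
      using deriv[of s] pos[of s] \<open>t \<le> b\<close> that by force
    show "continuous_on {a..t} y"
      using cont by (rule continuous_on_subset) (use \<open>t \<le> b\<close> in auto)
  qed
  have "0 < y' t" if t: "a \<le> t" "t \<le> b" for t
  proof (rule ccontr)
    assume "\<not> 0 < y' t"
    then have "y' t \<le> 0"
      by simp
    have "continuous_on {a..t} y'"
      using cont' by (rule continuous_on_subset) (use t in auto)
    then obtain r where r: "a < r" "r \<le> t" "y' r = 0" "\<And>s. a \<le> s \<Longrightarrow> s < r \<Longrightarrow> 0 < y' s"
      using first_zero_after_pos[OF \<open>a \<le> t\<close> _ \<open>0 < y' a\<close> \<open>y' t \<le> 0\<close>] by blast
    then have "y a \<le> y r"
      using increasing t by simp
    then show False
      using nonzero r t by simp
  qed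
  then show ?thesis
    using increasing by auto
qed

lemma derivative_neg_persists_backwards:
  fixes y y' :: "real \<Rightarrow> real"
  assumes "a \<le> b" and cont: "continuous_on {a..b} y" and cont': "continuous_on {a..b} y'"
    and deriv: "\<And>t. a < t \<Longrightarrow> t < b \<Longrightarrow> (y has_real_derivative y' t) (at t)"
    and "\<And>t. a \<le> t \<Longrightarrow> t \<le> b \<Longrightarrow> y b \<le> y t \<Longrightarrow> y' t \<noteq> 0"
    and "y' b < 0"
  shows "\<forall>t\<in>{a..b}. y' t < 0 \<and> y b \<le> y t"
proof -
  have mirror: "uminus ` {- b..- a} = {a..b}"
    by auto
  have "\<forall>t\<in>{- b..- a}. 0 < - y' (- t) \<and> y (- (- b)) \<le> y (- t)"
  proof (rule derivative_pos_persists[where y = "\<lambda>t. y (- t)" and y' = "\<lambda>t. - y' (- t)"])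
    have um: "continuous_on {- b..- a} (uminus :: real \<Rightarrow> real)"
      by (rule continuous_on_minus[OF continuous_on_id])
    show "continuous_on {- b..- a} (\<lambda>t. y (- t))"
      by (rule continuous_on_compose2[OF cont um]) (use mirror in auto)
    show "continuous_on {- b..- a} (\<lambda>t. - y' (- t))"
      by (intro continuous_on_minus continuous_on_compose2[OF cont' um]) (use mirror in auto)
    show "((\<lambda>t. y (- t)) has_real_derivative - y' (- t)) (at t)" if "- b < t" "t < - a" for t
      using deriv[of "- t"] that DERIV_mirror[where f = y and x = t] by simp
  qed (use assms in auto)
  then show ?thesis
    by (auto dest: bspec[of _ _ "- t" for t])
qed

text \<open>While \<open>y \<ge> \<beta>\<close> the derivative cannot change sign, so \<open>y\<close> would have to move
  monotonically with speed at least \<open>\<mu>\<close>, forwards or backwards in time, for longer than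
  \<open>2 B / \<mu>\<close>.\<close>
lemma eventually_less_of_bounded_and_fast_above:
  fixes y y' :: "real \<Rightarrow> real"
  assumes cont: "continuous_on {0..} y" and cont': "continuous_on {0..} y'"
    and deriv: "\<And>t. 0 < t \<Longrightarrow> (y has_real_derivative y' t) (at t)"
    and bounded: "\<And>t. 0 \<le> t \<Longrightarrow> \<bar>y t\<bar> \<le> B" and "0 < \<mu>" and "0 \<le> T0"
    and fast: "\<And>t. T0 \<le> t \<Longrightarrow> \<beta> \<le> y t \<Longrightarrow> \<mu> \<le> \<bar>y' t\<bar>"
  shows "\<forall>\<^sub>F t in at_top. y t < \<beta>"
proof (rule eventually_at_top_linorderI)
  define L where "L = 2 * B / \<mu> + 1"
  have "0 \<le> B"
    using bounded[of 0] by simp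
  then have "0 < L" "2 * B < L * \<mu>"
    using \<open>0 < \<mu>\<close> by (auto simp: L_def field_simps)
  have on_interval: "continuous_on {s..t} y" "continuous_on {s..t} y'"
    "\<And>r. s < r \<Longrightarrow> r < t \<Longrightarrow> (y has_real_derivative y' r) (at r)" if "0 \<le> s" for s t
    using that cont cont' deriv by (auto intro: continuous_on_subset)
  fix t assume t: "T0 + L \<le> t"
  then have "T0 \<le> t" "0 \<le> t"
    using \<open>0 < L\<close> \<open>0 \<le> T0\<close> by auto
  show "y t < \<beta>"
  proof (rule ccontr)
    assume "\<not> y t < \<beta>"
    then have fast_above: "\<mu> \<le> \<bar>y' r\<bar>" if "T0 \<le> r" "y t \<le> y r" for r
      using fast that by simp
    have "\<exists>p q. T0 \<le> p \<and> p + L \<le> q \<and> (\<forall>r\<in>{p..q}. y t \<le> y r)"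
    proof (cases "0 < y' t")
      case True
      have "\<forall>r\<in>{t..t + L}. 0 < y' r \<and> y t \<le> y r"
      proof (rule derivative_pos_persists[OF _ on_interval[OF \<open>0 \<le> t\<close>] _ True])
        show "y' r \<noteq> 0" if "t \<le> r" "y t \<le> y r" for r
          using fast_above[of r] \<open>0 < \<mu>\<close> \<open>T0 \<le> t\<close> that by auto
      qed (use \<open>0 < L\<close> in auto)
      then show ?thesis
        using \<open>T0 \<le> t\<close> by blast
    next
      case False
      then have "y' t < 0"
        using fast_above[OF \<open>T0 \<le> t\<close> order_refl] \<open>0 < \<mu>\<close> by auto
      have "\<forall>r\<in>{T0..t}. y' r < 0 \<and> y t \<le> y r"
      proof (rule derivative_neg_persists_backwards[OF \<open>T0 \<le> t\<close> on_interval[OF \<open>0 \<le> T0\<close>] _ \<open>y' t < 0\<close>])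
        show "y' r \<noteq> 0" if "T0 \<le> r" "y t \<le> y r" for r
          using fast_above[of r] \<open>0 < \<mu>\<close> that by auto
      qed auto
      then show ?thesis
        using t by blast
    qed
    then obtain p q where pq: "T0 \<le> p" "p + L \<le> q" "\<forall>r\<in>{p..q}. y t \<le> y r"
      by blast
    have "L * \<mu> \<le> (q - p) * \<mu>"
      using pq \<open>0 < \<mu>\<close> by (intro mult_right_mono) auto
    also have "\<dots> \<le> \<bar>y q - y p\<bar>"
      using pq \<open>0 \<le> T0\<close> \<open>0 < L\<close> fast_above
      by (intro halfline_abs_diff_ge_of_abs_derivative_ge[OF cont deriv]) auto
    also have "\<dots> \<le> 2 * B"
      using abs_triangle_ineq4[of "y q" "y p"] bounded[of p] bounded[of q] pq \<open>0 \<le> T0\<close> \<open>0 < L\<close>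
      by simp
    finally show False
      using \<open>2 * B < L * \<mu>\<close> by simp
  qed
qed

lemma eventually_abs_less_of_bounded_and_fast:
  fixes y y' :: "real \<Rightarrow> real"
  assumes cont: "continuous_on {0..} y" and cont': "continuous_on {0..} y'"
    and deriv: "\<And>t. 0 < t \<Longrightarrow> (y has_real_derivative y' t) (at t)"
    and bounded: "\<And>t. 0 \<le> t \<Longrightarrow> \<bar>y t\<bar> \<le> B" and "0 < \<mu>" and "0 \<le> T0"
    and fast: "\<And>t. T0 \<le> t \<Longrightarrow> \<beta> \<le> \<bar>y t\<bar> \<Longrightarrow> \<mu> \<le> \<bar>y' t\<bar>"
  shows "\<forall>\<^sub>F t in at_top. \<bar>y t\<bar> < \<beta>"
proof -
  have "\<forall>\<^sub>F t in at_top. y t < \<beta>"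
    by (rule eventually_less_of_bounded_and_fast_above[OF cont cont' deriv bounded \<open>0 < \<mu>\<close> \<open>0 \<le> T0\<close>])
      (use fast in auto)
  moreover have "\<forall>\<^sub>F t in at_top. - y t < \<beta>"
  proof (rule eventually_less_of_bounded_and_fast_above[where y' = "\<lambda>t. - y' t", OF _ _ _ _ \<open>0 < \<mu>\<close> \<open>0 \<le> T0\<close>])
    show "continuous_on {0..} (\<lambda>t. - y t)" "continuous_on {0..} (\<lambda>t. - y' t)"
      using cont cont' by (auto intro: continuous_on_minus)
    show "((\<lambda>t. - y t) has_real_derivative - y' t) (at t)" if "0 < t" for t
      using deriv[OF that] by (rule DERIV_minus)
  qed (use bounded fast in auto)
  ultimately show ?thesis
    by eventually_elim (simp add: abs_less_iff)
qed

section \<open>Trajectories of the saturated oscillator\<close>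

locale saturated_oscillator_trajectory =
  fixes \<omega> ub ul k1 k2 :: real and y1 y2 :: "real \<Rightarrow> real"
  assumes \<omega>: "0 < \<omega>" and ub: "0 < ub" and ul: "0 < ul" and k1: "-1 < k1"
    and cont1: "continuous_on {0..} y1" and cont2: "continuous_on {0..} y2"
    and deriv1: "\<And>t. 0 < t \<Longrightarrow> (y1 has_real_derivative \<omega> * y2 t) (at t)"
    and deriv2: "\<And>t. 0 < t \<Longrightarrow>
      (y2 has_real_derivative - \<omega> * (y1 t + sat ub ul (k1 * y1 t + k2 * y2 t))) (at t)"
begin

definition coercivity :: real where
  "coercivity = min 1 (1 + k1)"

lemma coercivity_pos: "0 < coercivity"
  using k1 by (simp add: coercivity_def)

definition lyapunov :: "real \<Rightarrow> real" where
  "lyapunov t = (y2 t)\<^sup>2 / 2 + restoring_potential ub ul k1 (y1 t)"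

definition sat_gap :: "real \<Rightarrow> real" where
  "sat_gap t = sat ub ul (k1 * y1 t + k2 * y2 t) - sat ub ul (k1 * y1 t)"

lemma has_real_derivative_lyapunov:
  assumes "0 < t"
  shows "(lyapunov has_real_derivative - \<omega> * (y2 t * sat_gap t)) (at t)"
proof -
  have "((\<lambda>t. (y2 t)\<^sup>2 / 2) has_real_derivative
      y2 t * (- \<omega> * (y1 t + sat ub ul (k1 * y1 t + k2 * y2 t)))) (at t)"
    by (rule DERIV_cong[OF DERIV_cdivide[OF DERIV_power[OF deriv2[OF assms], of 2]]]) simp
  moreover have "((\<lambda>t. restoring_potential ub ul k1 (y1 t)) has_real_derivative
      restoring_force ub ul k1 (y1 t) * (\<omega> * y2 t)) (at t)"
    by (rule DERIV_chain2[OF has_real_derivative_restoring_potential[OF ub ul] deriv1[OF assms]])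
  ultimately have "(lyapunov has_real_derivative
      y2 t * (- \<omega> * (y1 t + sat ub ul (k1 * y1 t + k2 * y2 t)))
      + restoring_force ub ul k1 (y1 t) * (\<omega> * y2 t)) (at t)"
    unfolding lyapunov_def[abs_def] by (rule DERIV_add)
  then show ?thesis
    by (simp add: sat_gap_def restoring_force_def algebra_simps)
qed

lemma continuous_on_lyapunov: "continuous_on {0..} lyapunov"
proof -
  have "continuous_on UNIV (restoring_potential ub ul k1)"
    using has_real_derivative_restoring_potential[OF ub ul]
    by (meson DERIV_continuous continuous_at_imp_continuous_on)
  then show ?thesis
    unfolding lyapunov_def[abs_def]
    by (intro continuous_on_add continuous_on_divide continuous_on_power cont2 continuous_on_const
        continuous_on_compose2[OF _ cont1]) auto
qed

lemma lyapunov_bounds: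
  shows "coercivity / 2 * ((y1 t)\<^sup>2 + (y2 t)\<^sup>2) \<le> lyapunov t"
    and "lyapunov t \<le> (1 + \<bar>k1\<bar>) / 2 * ((y1 t)\<^sup>2 + (y2 t)\<^sup>2)"
proof -
  have "coercivity * (y2 t)\<^sup>2 \<le> (y2 t)\<^sup>2"
    using mult_right_mono[of coercivity 1 "(y2 t)\<^sup>2"] by (simp add: coercivity_def)
  then show "coercivity / 2 * ((y1 t)\<^sup>2 + (y2 t)\<^sup>2) \<le> lyapunov t"
    using restoring_potential_bounds(1)[OF ub ul, of k1 "y1 t"]
    unfolding lyapunov_def coercivity_def by (simp add: algebra_simps)
  have "0 \<le> \<bar>k1\<bar> * (y2 t)\<^sup>2"
    by simp
  moreover have "(1 + \<bar>k1\<bar>) / 2 * ((y1 t)\<^sup>2 + (y2 t)\<^sup>2)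
      = (1 + \<bar>k1\<bar>) * (y1 t)\<^sup>2 / 2 + (y2 t)\<^sup>2 / 2 + \<bar>k1\<bar> * (y2 t)\<^sup>2 / 2"
    by (simp add: field_simps)
  ultimately show "lyapunov t \<le> (1 + \<bar>k1\<bar>) / 2 * ((y1 t)\<^sup>2 + (y2 t)\<^sup>2)"
    using restoring_potential_bounds(2)[OF ub ul, of k1 "y1 t"]
    unfolding lyapunov_def by linarith
qed

lemma lyapunov_antimono:
  assumes "0 \<le> k2"
  shows "antimono_on {0..} lyapunov"
proof (rule antimono_on_halfline_of_derivative_nonpos[OF continuous_on_lyapunov has_real_derivative_lyapunov])
  show "- \<omega> * (y2 t * sat_gap t) \<le> 0" for t
    using mult_diff_mono_nonneg[OF mono_sat[of ub ul] assms, of "y2 t" "k1 * y1 t"] \<omega>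
    by (simp add: sat_gap_def mult_nonneg_nonneg)
qed

lemma lyapunov_mono:
  assumes "k2 \<le> 0"
  shows "mono_on {0..} lyapunov"
proof (rule mono_on_halfline_of_derivative_nonneg[OF continuous_on_lyapunov has_real_derivative_lyapunov])
  show "0 \<le> - \<omega> * (y2 t * sat_gap t)" for t
    using mult_diff_mono_nonneg[OF mono_sat[of ub ul], of "- k2" "- y2 t" "k1 * y1 t"] assms \<omega>
    by (simp add: sat_gap_def mult_nonneg_nonpos)
qed

lemma norm_squared_le:
  assumes "0 \<le> k2" "0 \<le> t"
  shows "(y1 t)\<^sup>2 + (y2 t)\<^sup>2 \<le> (1 + \<bar>k1\<bar>) / coercivity * ((y1 0)\<^sup>2 + (y2 0)\<^sup>2)"
proof -
  have "coercivity / 2 * ((y1 t)\<^sup>2 + (y2 t)\<^sup>2) \<le> lyapunov t"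
    by (rule lyapunov_bounds(1))
  also have "\<dots> \<le> lyapunov 0"
    using monotone_onD[OF lyapunov_antimono[OF \<open>0 \<le> k2\<close>], of 0 t] \<open>0 \<le> t\<close> by simp
  also have "\<dots> \<le> (1 + \<bar>k1\<bar>) / 2 * ((y1 0)\<^sup>2 + (y2 0)\<^sup>2)"
    by (rule lyapunov_bounds(2))
  finally show ?thesis
    using coercivity_pos by (simp add: field_simps)
qed

end

locale saturated_oscillator_trajectory_pos = saturated_oscillator_trajectory +
  assumes k2: "0 < k2"
begin

definition bound :: real where
  "bound = sqrt (2 * lyapunov 0 / coercivity)"

lemma abs_le_bound:
  assumes "0 \<le> t"
  shows "\<bar>y1 t\<bar> \<le> bound" and "\<bar>y2 t\<bar> \<le> bound"
proof -
  have "coercivity / 2 * ((y1 t)\<^sup>2 + (y2 t)\<^sup>2) \<le> lyapunov 0"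
    using lyapunov_bounds(1)[of t] monotone_onD[OF lyapunov_antimono, of 0 t] k2 assms by simp
  then have "(y1 t)\<^sup>2 + (y2 t)\<^sup>2 \<le> 2 * lyapunov 0 / coercivity"
    using coercivity_pos by (simp add: field_simps)
  then have "(y1 t)\<^sup>2 \<le> 2 * lyapunov 0 / coercivity" "(y2 t)\<^sup>2 \<le> 2 * lyapunov 0 / coercivity"
    using zero_le_power2[of "y1 t"] zero_le_power2[of "y2 t"] by linarith+
  then show "\<bar>y1 t\<bar> \<le> bound" "\<bar>y2 t\<bar> \<le> bound"
    unfolding bound_def by (metis real_sqrt_abs real_sqrt_le_mono)+
qed

lemma bound_nonneg: "0 \<le> bound"
  using abs_le_bound(1)[of 0] by simp

definition y2_deriv :: "real \<Rightarrow> real" where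
  "y2_deriv t = - \<omega> * (y1 t + sat ub ul (k1 * y1 t + k2 * y2 t))"

lemma has_real_derivative_y2: "0 < t \<Longrightarrow> (y2 has_real_derivative y2_deriv t) (at t)"
  unfolding y2_deriv_def by (rule deriv2)

lemma lipschitz_y1: "(\<omega> * bound)-lipschitz_on {0..} y1"
proof (rule lipschitz_on_halfline_of_bounded_derivative[OF cont1 deriv1])
  show "\<bar>\<omega> * y2 t\<bar> \<le> \<omega> * bound" if "0 < t" for t
    using abs_le_bound(2)[of t] \<omega> that by (simp add: abs_mult)
qed

lemma lipschitz_y2: "(\<omega> * (bound + max ub ul))-lipschitz_on {0..} y2"
proof (rule lipschitz_on_halfline_of_bounded_derivative[OF cont2 has_real_derivative_y2])
  fix t :: real assume "0 < t"
  have "\<bar>y1 t + sat ub ul (k1 * y1 t + k2 * y2 t)\<bar> \<le> bound + max ub ul"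
    using abs_le_bound(1)[of t] abs_sat_le[of ub ul] ub ul \<open>0 < t\<close> by (smt (verit))
  then show "\<bar>y2_deriv t\<bar> \<le> \<omega> * (bound + max ub ul)"
    unfolding y2_deriv_def using \<omega> by (simp add: abs_mult)
qed

lemma lipschitz_y2_deriv: "\<exists>C. C-lipschitz_on {0..} y2_deriv"
  unfolding y2_deriv_def
  by (rule exI, (rule lipschitz_on_cmult_real lipschitz_on_add lipschitz_y1 lipschitz_y2
        lipschitz_on_compose2[where g = "sat ub ul", OF _ lipschitz_on_sat])+)

lemma lipschitz_sat_gap: "\<exists>C. C-lipschitz_on {0..} sat_gap"
  unfolding sat_gap_def[abs_def]
  by (rule exI, (rule lipschitz_on_diff lipschitz_on_cmult_real lipschitz_on_add lipschitz_y1
        lipschitz_y2 lipschitz_on_compose2[where g = "sat ub ul", OF _ lipschitz_on_sat])+)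

lemma abs_sat_gap_le: "\<bar>sat_gap t\<bar> \<le> k2 * \<bar>y2 t\<bar>"
  using abs_sat_diff_le[of ub ul "k1 * y1 t + k2 * y2 t" "k1 * y1 t"] k2
  by (simp add: sat_gap_def abs_mult)

lemma lyapunov_dissipation_tendsto_0: "((\<lambda>t. - \<omega> * (y2 t * sat_gap t)) \<longlongrightarrow> 0) at_top"
proof -
  obtain C where "C-lipschitz_on {0..} sat_gap"
    using lipschitz_sat_gap by blast
  then have "(\<omega> * (bound + max ub ul) * (k2 * bound) + bound * C)-lipschitz_on {0..}
      (\<lambda>t. y2 t * sat_gap t)"
  proof (rule lipschitz_on_mult_bounded[OF lipschitz_y2])
    fix t :: real assume "t \<in> {0..}"
    then show "\<bar>y2 t\<bar> \<le> bound"
      by (simp add: abs_le_bound)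
    have "k2 * \<bar>y2 t\<bar> \<le> k2 * bound"
      using abs_le_bound(2)[of t] k2 \<open>t \<in> {0..}\<close> by (intro mult_left_mono) auto
    then show "\<bar>sat_gap t\<bar> \<le> k2 * bound"
      using abs_sat_gap_le[of t] by linarith
  qed (use bound_nonneg k2 in simp_all)
  then have "(\<bar>- \<omega>\<bar> * (\<omega> * (bound + max ub ul) * (k2 * bound) + bound * C))-lipschitz_on {0..}
      (\<lambda>t. - \<omega> * (y2 t * sat_gap t))"
    by (rule lipschitz_on_cmult_real)
  moreover have "0 \<le> lyapunov t" for t
  proof -
    have "0 \<le> coercivity / 2 * ((y1 t)\<^sup>2 + (y2 t)\<^sup>2)"
      using coercivity_pos by simp
    then show ?thesis
      using lyapunov_bounds(1)[of t] by linarith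
  qed
  then have "(lyapunov \<longlongrightarrow> Inf (lyapunov ` {0..})) at_top"
    using lyapunov_antimono k2 by (intro tendsto_Inf_of_antimono_on_halfline) auto
  ultimately show ?thesis
    using barbalat[OF continuous_on_lyapunov has_real_derivative_lyapunov] by blast
qed

lemma y2_tendsto_0: "(y2 \<longlongrightarrow> 0) at_top"
proof (rule tendstoI)
  fix \<beta> :: real assume "0 < \<beta>"
  obtain \<zeta> \<mu> where "0 < \<zeta>" "0 < \<mu>" and force_large:
    "\<And>x1 x2. \<beta> \<le> \<bar>x2\<bar> \<Longrightarrow> \<bar>sat ub ul (k1 * x1 + k2 * x2) - sat ub ul (k1 * x1)\<bar> < \<zeta>
      \<Longrightarrow> \<mu> \<le> \<bar>x1 + sat ub ul (k1 * x1 + k2 * x2)\<bar>"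
    using force_bounded_below_where_gap_small[OF ub ul k1 k2 \<open>0 < \<beta>\<close>] by blast
  have "\<forall>\<^sub>F t in at_top. dist (- \<omega> * (y2 t * sat_gap t)) 0 < \<omega> * (\<beta> * \<zeta>)"
    using lyapunov_dissipation_tendsto_0 \<omega> \<open>0 < \<beta>\<close> \<open>0 < \<zeta>\<close> by (intro tendstoD) auto
  then obtain T where T: "\<And>t. T \<le> t \<Longrightarrow> \<bar>y2 t * sat_gap t\<bar> < \<beta> * \<zeta>"
    using \<omega> by (auto simp: eventually_at_top_linorder abs_mult)
  have "\<forall>\<^sub>F t in at_top. \<bar>y2 t\<bar> < \<beta>"
  proof (rule eventually_abs_less_of_bounded_and_fast[OF cont2 _ has_real_derivative_y2])
    obtain C where "C-lipschitz_on {0..} y2_deriv"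
      using lipschitz_y2_deriv by blast
    then show "continuous_on {0..} y2_deriv"
      by (rule lipschitz_on_continuous_on)
    show "\<bar>y2 t\<bar> \<le> bound" if "0 \<le> t" for t
      using that by (rule abs_le_bound)
    show "\<omega> * \<mu> \<le> \<bar>y2_deriv t\<bar>" if "max T 0 \<le> t" "\<beta> \<le> \<bar>y2 t\<bar>" for t
    proof -
      have "\<beta> * \<bar>sat_gap t\<bar> < \<beta> * \<zeta>"
        using T[of t] that mult_right_mono[OF \<open>\<beta> \<le> \<bar>y2 t\<bar>\<close>, of "\<bar>sat_gap t\<bar>"]
        by (simp add: abs_mult)
      then have "\<bar>sat_gap t\<bar> < \<zeta>"
        using \<open>0 < \<beta>\<close> by simp
      then have "\<mu> \<le> \<bar>y1 t + sat ub ul (k1 * y1 t + k2 * y2 t)\<bar>"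
        using force_large[OF \<open>\<beta> \<le> \<bar>y2 t\<bar>\<close>] by (simp add: sat_gap_def)
      then show ?thesis
        using \<omega> by (simp add: y2_deriv_def abs_mult)
    qed
  qed (use \<omega> \<open>0 < \<mu>\<close> in simp_all)
  then show "\<forall>\<^sub>F t in at_top. dist (y2 t) 0 < \<beta>"
    by simp
qed

lemma y2_deriv_tendsto_0: "(y2_deriv \<longlongrightarrow> 0) at_top"
proof -
  obtain C where "C-lipschitz_on {0..} y2_deriv"
    using lipschitz_y2_deriv by blast
  then show ?thesis
    using barbalat[OF cont2 has_real_derivative_y2 _ y2_tendsto_0] by blast
qed

lemma y1_tendsto_0: "(y1 \<longlongrightarrow> 0) at_top"
proof (rule Lim_null_comparison)
  have "coercivity * \<bar>y1 t\<bar> \<le> \<bar>y2_deriv t\<bar> / \<omega> + k2 * \<bar>y2 t\<bar>" for t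
  proof -
    have "coercivity * \<bar>y1 t\<bar> \<le> \<bar>restoring_force ub ul k1 (y1 t)\<bar>"
      unfolding coercivity_def using ub ul by (intro abs_restoring_force_ge) auto
    also have "restoring_force ub ul k1 (y1 t) = - y2_deriv t / \<omega> - sat_gap t"
      using \<omega> by (simp add: restoring_force_def y2_deriv_def sat_gap_def)
    also have "\<bar>- y2_deriv t / \<omega> - sat_gap t\<bar> \<le> \<bar>y2_deriv t\<bar> / \<omega> + \<bar>sat_gap t\<bar>"
      using abs_triangle_ineq4[of "- (y2_deriv t / \<omega>)" "sat_gap t"] \<omega> by simp
    finally show ?thesis
      using abs_sat_gap_le[of t] by linarith
  qed
  then show "\<forall>\<^sub>F t in at_top. norm (y1 t) \<le> (\<bar>y2_deriv t\<bar> / \<omega> + k2 * \<bar>y2 t\<bar>) / coercivity"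
    using coercivity_pos by (simp add: field_simps)
  show "((\<lambda>t. (\<bar>y2_deriv t\<bar> / \<omega> + k2 * \<bar>y2 t\<bar>) / coercivity) \<longlongrightarrow> 0) at_top"
    using y2_deriv_tendsto_0 y2_tendsto_0 \<omega> coercivity_pos by (auto intro!: tendsto_eq_intros)
qed

end

section \<open>Global asymptotic stability\<close>

lemma vec2_eq_iff: "(x :: real^2) = y \<longleftrightarrow> x $ 1 = y $ 1 \<and> x $ 2 = y $ 2"
  by (simp add: vec_eq_iff forall_2)

lemma norm_vec2_squared: "(norm (x :: real^2))\<^sup>2 = (x $ 1)\<^sup>2 + (x $ 2)\<^sup>2"
  by (simp add: norm_vec_def L2_set_def sum_2)

lemma osc_field_0: "0 \<le> ub \<Longrightarrow> 0 \<le> ul \<Longrightarrow> osc_field \<omega> ub ul k1 k2 0 = 0"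
  by (simp add: vec2_eq_iff osc_field_nth sat_0)

lemma saturated_oscillator_trajectoryI:
  assumes sol: "is_solution (osc_field \<omega> ub ul k1 k2) x"
    and "0 < \<omega>" "0 < ub" "0 < ul" "-1 < k1"
  shows "saturated_oscillator_trajectory \<omega> ub ul k1 k2 (\<lambda>t. x t $ 1) (\<lambda>t. x t $ 2)"
proof -
  have deriv: "((\<lambda>t. x t $ i) has_real_derivative osc_field \<omega> ub ul k1 k2 (x t) $ i)
      (at t within {0..})" if "0 \<le> t" for t i
    using bounded_linear.has_vector_derivative[OF bounded_linear_vec_nth, of x _ "at t within {0..}" i]
      sol that unfolding is_solution_def by (simp add: has_real_derivative_iff_has_vector_derivative)
  have cont: "continuous_on {0..} (\<lambda>t. x t $ i)" for i
    using deriv DERIV_continuous continuous_on_eq_continuous_within by (metis atLeast_iff)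
  have "at t within {0..} = at t" if "0 < t" for t :: real
    by (rule at_within_nhd[where S = "{0<..}"]) (use that in auto)
  then have deriv_at: "((\<lambda>t. x t $ i) has_real_derivative osc_field \<omega> ub ul k1 k2 (x t) $ i) (at t)"
    if "0 < t" for t i
    using deriv[of t i] that by simp
  show ?thesis
  proof
    show "((\<lambda>t. x t $ 1) has_real_derivative \<omega> * x t $ 2) (at t)" if "0 < t" for t
      using deriv_at[OF that, of 1] by (simp add: osc_field_nth)
    show "((\<lambda>t. x t $ 2) has_real_derivative
        - \<omega> * (x t $ 1 + sat ub ul (k1 * x t $ 1 + k2 * x t $ 2))) (at t)" if "0 < t" for t
      using deriv_at[OF that, of 2] by (simp add: osc_field_nth)
  qed (use assms cont in auto)
qed

lemma GAS_origin_osc_field: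
  assumes "0 < \<omega>" "0 < ub" "0 < ul" "-1 < k1" "0 < k2"
  shows "GAS_origin (osc_field \<omega> ub ul k1 k2)"
  unfolding GAS_origin_def
proof (intro conjI allI impI)
  show "osc_field \<omega> ub ul k1 k2 0 = 0"
    using assms by (simp add: osc_field_0)
next
  fix \<epsilon> :: real assume "0 < \<epsilon>"
  define \<kappa> where "\<kappa> = (1 + \<bar>k1\<bar>) / min 1 (1 + k1)"
  have "1 \<le> \<kappa>"
    using assms by (auto simp: \<kappa>_def min_def field_simps)
  show "\<exists>\<delta>>0. \<forall>x. is_solution (osc_field \<omega> ub ul k1 k2) x \<longrightarrow> norm (x 0) < \<delta>
      \<longrightarrow> (\<forall>t\<ge>0. norm (x t) < \<epsilon>)"
  proof (intro exI[of _ "\<epsilon> / \<kappa>"] conjI allI impI)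
    show "0 < \<epsilon> / \<kappa>"
      using \<open>0 < \<epsilon>\<close> \<open>1 \<le> \<kappa>\<close> by simp
    fix x and t :: real
    assume sol: "is_solution (osc_field \<omega> ub ul k1 k2) x" and "norm (x 0) < \<epsilon> / \<kappa>" and "0 \<le> t"
    interpret saturated_oscillator_trajectory \<omega> ub ul k1 k2 "\<lambda>t. x t $ 1" "\<lambda>t. x t $ 2"
      by (rule saturated_oscillator_trajectoryI[OF sol]) (use assms in auto)
    have "(norm (x t))\<^sup>2 \<le> \<kappa> * (norm (x 0))\<^sup>2"
      using norm_squared_le[of t] assms \<open>0 \<le> t\<close>
      by (simp add: norm_vec2_squared \<kappa>_def coercivity_def)
    also have "\<dots> < \<kappa> * (\<epsilon> / \<kappa>)\<^sup>2"
      using \<open>norm (x 0) < \<epsilon> / \<kappa>\<close> \<open>1 \<le> \<kappa>\<close> by (intro mult_strict_left_mono power_strict_mono) auto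
    also have "\<dots> = \<epsilon>\<^sup>2 / \<kappa>"
      using \<open>1 \<le> \<kappa>\<close> by (simp add: power2_eq_square)
    also have "\<dots> \<le> \<epsilon>\<^sup>2"
      using mult_left_mono[OF \<open>1 \<le> \<kappa>\<close>, of "\<epsilon>\<^sup>2"] \<open>1 \<le> \<kappa>\<close> by (simp add: divide_le_eq)
    finally show "norm (x t) < \<epsilon>"
      using \<open>0 < \<epsilon>\<close> by (simp add: power_less_imp_less_base)
  qed
next
  fix x assume sol: "is_solution (osc_field \<omega> ub ul k1 k2) x"
  interpret saturated_oscillator_trajectory_pos \<omega> ub ul k1 k2 "\<lambda>t. x t $ 1" "\<lambda>t. x t $ 2"
    using saturated_oscillator_trajectoryI[OF sol] assms
    by (simp add: saturated_oscillator_trajectory_pos_def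
        saturated_oscillator_trajectory_pos_axioms_def)
  show "(x \<longlongrightarrow> 0) at_top"
  proof (rule vec_tendstoI)
    fix i :: 2
    show "((\<lambda>t. x t $ i) \<longlongrightarrow> 0 $ i) at_top"
      using exhaust_2[of i] y1_tendsto_0 y2_tendsto_0 by auto
  qed
qed

lemma not_GAS_origin_osc_field_if_k1_le:
  assumes "0 < ub" "0 < ul" "k1 \<le> -1"
  shows "\<not> GAS_origin (osc_field \<omega> ub ul k1 k2)"
proof
  define e :: "real^2" where "e = vector [ul, 0]"
  have "k1 * ul \<le> - ul"
    using mult_right_mono[of k1 "-1" ul] assms by simp
  then have "osc_field \<omega> ub ul k1 k2 e = 0"
    using assms by (simp add: vec2_eq_iff osc_field_nth e_def sat_def)
  then have "is_solution (osc_field \<omega> ub ul k1 k2) (\<lambda>t. e)"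
    unfolding is_solution_def by (auto intro: derivative_eq_intros)
  moreover assume "GAS_origin (osc_field \<omega> ub ul k1 k2)"
  ultimately have "((\<lambda>t::real. e) \<longlongrightarrow> 0) at_top"
    unfolding GAS_origin_def by blast
  then show False
    using assms by (simp add: tendsto_const_iff vec2_eq_iff e_def)
qed

lemma not_GAS_origin_osc_field_if_k2_nonpos:
  assumes "0 < \<omega>" "0 < ub" "0 < ul" "-1 < k1" "k2 \<le> 0"
  shows "\<not> GAS_origin (osc_field \<omega> ub ul k1 k2)"
proof
  assume gas: "GAS_origin (osc_field \<omega> ub ul k1 k2)"
  obtain L where "L-lipschitz_on UNIV (osc_field \<omega> ub ul k1 k2)"
    using lipschitz_osc_field by blast
  define x where "x = picard_limit (osc_field \<omega> ub ul k1 k2) (vector [1, 0])"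
  have sol: "is_solution (osc_field \<omega> ub ul k1 k2) x" and x0: "x 0 = vector [1, 0]"
    unfolding x_def by (rule picard_limit_solves[OF \<open>L-lipschitz_on _ _\<close>])+
  interpret saturated_oscillator_trajectory \<omega> ub ul k1 k2 "\<lambda>t. x t $ 1" "\<lambda>t. x t $ 2"
    by (rule saturated_oscillator_trajectoryI[OF sol]) (use assms in auto)
  have "(x \<longlongrightarrow> 0) at_top"
    using gas sol unfolding GAS_origin_def by blast
  then have "((\<lambda>t. (1 + \<bar>k1\<bar>) / 2 * (norm (x t))\<^sup>2) \<longlongrightarrow> 0) at_top"
    by (auto intro!: tendsto_eq_intros simp: tendsto_norm_zero_iff)
  then have "\<forall>\<^sub>F t in at_top. (1 + \<bar>k1\<bar>) / 2 * (norm (x t))\<^sup>2 < coercivity / 2"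
    using coercivity_pos by (intro order_tendstoD) auto
  then obtain t where "0 \<le> t" and small: "(1 + \<bar>k1\<bar>) / 2 * (norm (x t))\<^sup>2 < coercivity / 2"
    by (metis eventually_at_top_linorder linorder_linear)
  have "coercivity / 2 \<le> lyapunov 0"
    using lyapunov_bounds(1)[of 0] x0 by simp
  also have "\<dots> \<le> lyapunov t"
    using monotone_onD[OF lyapunov_mono[OF \<open>k2 \<le> 0\<close>], of 0 t] \<open>0 \<le> t\<close> by simp
  also have "\<dots> \<le> (1 + \<bar>k1\<bar>) / 2 * (norm (x t))\<^sup>2"
    using lyapunov_bounds(2)[of t] by (simp add: norm_vec2_squared)
  finally show False
    using small by simp
qed

theorem proposition3:
  fixes \<omega> ubar ulow k1 k2 :: real
  assumes "\<omega> > 0" and "ubar > 0" and "ulow > 0"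
  shows "GAS_origin (osc_field \<omega> ubar ulow k1 k2) \<longleftrightarrow> (k1 > -1 \<and> k2 > 0)"
proof
  assume "GAS_origin (osc_field \<omega> ubar ulow k1 k2)"
  then show "k1 > -1 \<and> k2 > 0"
    using not_GAS_origin_osc_field_if_k1_le not_GAS_origin_osc_field_if_k2_nonpos assms
    by (meson not_le)
next
  assume "k1 > -1 \<and> k2 > 0"
  then show "GAS_origin (osc_field \<omega> ubar ulow k1 k2)"
    using GAS_origin_osc_field assms by blast
qed

end
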